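(* Let $G_\pm(x)=|1+e^{2\pi i x}\pm e^{14\pi i x}|^2$ and $d(t)=\int_0^{1/2}\big[G_-^t(x)-G_+^t(x)\big]\,dx$ for $t>0$. Then $d'(5)>0$.
   Context: For $t>0$, $d^{(j)}(t)=\int_0^{1/2}G_-^t\log^jG_-\,dx-\int_0^{1/2}G_+^t\log^jG_+\,dx$. *)

theory Defs
  imports "HOL-Analysis.Analysis"
begin

definition G_minus :: "real \<Rightarrow> real" where
  "G_minus x = (cmod (1 + exp (2 * pi * \<i> * complex_of_real x) - exp (14 * pi * \<i> * complex_of_real x)))\<^sup>2"

definition G_plus :: "real \<Rightarrow> real" where
  "G_plus x = (cmod (1 + exp (2 * pi * \<i> * complex_of_real x) + exp (14 * pi * \<i> * complex_of_real x)))\<^sup>2"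

definition d_fun :: "real \<Rightarrow> real" where
  "d_fun t = integral {0..1/2} (\<lambda>x. G_minus x powr t - G_plus x powr t)"

end

theory Submission
  imports Defs
begin

text \<open>By Leibniz's rule \<open>d'(5) = \<integral> \<psi>(G\<^sub>-) - \<psi>(G\<^sub>+)\<close> with \<open>\<psi>(g) = g\<^sup>5 ln g\<close>.
  Since \<open>0 < G\<^sub>\<plusminus> \<le> 9\<close>, \<open>\<psi>\<close> may be replaced by an explicit polynomial \<open>p\<close> of degree 12 with
  \<open>\<bar>\<psi> - p\<bar> \<le> 1/400\<close> on \<open>(0, 9]\<close>. The integrals of the powers \<open>G\<^sub>\<plusminus>\<^sup>k = \<bar>P\<^sub>\<plusminus>(e(x))\<^sup>k\<bar>\<^sup>2\<close>,
  \<open>P\<^sub>\<plusminus>(z) = 1 + z \<plusminus> z\<^sup>7\<close>, are by Parseval half the sum of the squared coefficients of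
  \<open>P\<^sub>\<plusminus>\<^sup>k\<close>, so \<open>\<integral> p(G\<^sub>-) - p(G\<^sub>+)\<close> is an explicit rational, and it exceeds the total
  approximation error \<open>1/400\<close>. The bound \<open>\<bar>\<psi> - p\<bar> \<le> 1/400\<close> is certified piecewise: on each
  piece \<open>ln\<close> is expanded around some \<open>c = 2\<^sup>a3\<^sup>b\<close>, and nonnegativity of the resulting
  polynomial in \<open>h = g - m\<close> is checked by the crude bound \<open>c\<^sub>0 - \<Sum>\<^sub>i\<^sub>>\<^sub>0 \<bar>c\<^sub>i\<bar> r\<^sup>i\<close>.\<close>

section \<open>Polynomials as coefficient lists\<close>

text \<open>Coefficient lists, constant term first. Unlike \<open>'a poly\<close>, the simplifier evaluates them
  on concrete rational data, which is how the numerical certificates below are checked.\<close>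

fun plist_add :: "'a::comm_ring_1 list \<Rightarrow> 'a list \<Rightarrow> 'a list" where
  "plist_add [] ys = ys"
| "plist_add xs [] = xs"
| "plist_add (x # xs) (y # ys) = (x + y) # plist_add xs ys"

fun plist_mult :: "'a::comm_ring_1 list \<Rightarrow> 'a list \<Rightarrow> 'a list" where
  "plist_mult [] ys = []"
| "plist_mult (x # xs) ys = plist_add (map ((*) x) ys) (0 # plist_mult xs ys)"

fun plist_pow :: "'a::comm_ring_1 list \<Rightarrow> nat \<Rightarrow> 'a list" where
  "plist_pow p 0 = [1]"
| "plist_pow p (Suc k) = plist_mult p (plist_pow p k)"

fun plist_eval :: "'a::comm_ring_1 list \<Rightarrow> 'a \<Rightarrow> 'a" where
  "plist_eval [] x = 0"
| "plist_eval (c # cs) x = c + x * plist_eval cs x"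

fun plist_comp :: "'a::comm_ring_1 list \<Rightarrow> 'a list \<Rightarrow> 'a list" where
  "plist_comp [] q = []"
| "plist_comp (c # cs) q = plist_add [c] (plist_mult q (plist_comp cs q))"

lemma plist_eval_add [simp]: "plist_eval (plist_add p q) x = plist_eval p x + plist_eval q x"
  by (induction p q rule: plist_add.induct) (auto simp: algebra_simps)

lemma plist_eval_scale [simp]: "plist_eval (map ((*) c) p) x = c * plist_eval p x"
  by (induction p) (auto simp: algebra_simps)

lemma plist_eval_uminus [simp]: "plist_eval (map uminus p) x = - plist_eval p x"
  by (induction p) auto

lemma plist_eval_mult [simp]: "plist_eval (plist_mult p q) x = plist_eval p x * plist_eval q x"
  by (induction p q rule: plist_mult.induct) (auto simp: algebra_simps)

lemma plist_eval_pow [simp]: "plist_eval (plist_pow p k) x = plist_eval p x ^ k"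
  by (induction k) auto

text \<open>These two rules let the simplifier evaluate \<open>plist_pow\<close> at numerals.\<close>

lemma plist_pow_numeral [simp]:
  "plist_pow p (numeral n) = plist_mult p (plist_pow p (pred_numeral n))"
  by (simp add: numeral_eq_Suc)

lemma plist_pow_one [simp]: "plist_pow p 1 = plist_mult p [1]"
  by simp

lemma plist_eval_comp [simp]: "plist_eval (plist_comp p q) x = plist_eval p (plist_eval q x)"
  by (induction p q rule: plist_comp.induct) (auto simp: algebra_simps)

lemma plist_eval_sum: "plist_eval p x = (\<Sum>i<length p. p ! i * x ^ i)"
proof (induction p)
  case (Cons c cs)
  have "(\<Sum>i<length (c # cs). (c # cs) ! i * x ^ i) = c + (\<Sum>i<length cs. cs ! i * x ^ Suc i)"
    by (simp add: sum.lessThan_Suc_shift del: sum.lessThan_Suc)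
  also have "\<dots> = c + x * (\<Sum>i<length cs. cs ! i * x ^ i)"
    by (simp add: sum_distrib_left algebra_simps)
  finally show ?case using Cons by simp
qed simp

lemma map_of_int_plist_add:
  "map of_int (plist_add p q) = plist_add (map of_int p) (map of_int q)"
  by (induction p q rule: plist_add.induct) auto

lemma map_of_int_plist_pow:
  "map (of_int :: int \<Rightarrow> 'a::comm_ring_1) (plist_pow p k) = plist_pow (map of_int p) k"
proof -
  have mult: "map (of_int :: int \<Rightarrow> 'a) (plist_mult p q) = plist_mult (map of_int p) (map of_int q)"
    for p q by (induction p q rule: plist_mult.induct) (auto simp: map_of_int_plist_add o_def)
  show ?thesis by (induction k) (auto simp: mult)
qed

fun plist_abs_eval :: "real list \<Rightarrow> real \<Rightarrow> real" where
  "plist_abs_eval [] r = 0"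
| "plist_abs_eval (c # cs) r = \<bar>c\<bar> + r * plist_abs_eval cs r"

lemma abs_plist_eval_le: "\<bar>h\<bar> \<le> r \<Longrightarrow> \<bar>plist_eval p h\<bar> \<le> plist_abs_eval p r"
proof (induction p)
  case (Cons c cs)
  have "\<bar>h * plist_eval cs h\<bar> \<le> r * plist_abs_eval cs r"
    unfolding abs_mult using Cons by (intro mult_mono) auto
  then show ?case by simp
qed simp

definition plist_lower_bound :: "real list \<Rightarrow> real \<Rightarrow> real" where
  "plist_lower_bound p r = (case p of [] \<Rightarrow> 0 | c # cs \<Rightarrow> c - r * plist_abs_eval cs r)"

lemma plist_lower_bound_le:
  assumes "\<bar>h\<bar> \<le> r"
  shows "plist_lower_bound p r \<le> plist_eval p h"
proof (cases p)
  case (Cons c cs)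
  have "\<bar>h * plist_eval cs h\<bar> \<le> r * plist_abs_eval cs r"
    unfolding abs_mult using abs_plist_eval_le[OF assms] assms by (intro mult_mono) auto
  then show ?thesis using Cons by (simp add: plist_lower_bound_def)
qed (simp add: plist_lower_bound_def)

section \<open>Bounds on the logarithm\<close>

text \<open>The coefficient for \<open>n = 0\<close> is \<open>-1/0 = 0\<close>, matching the zeroth term of \<open>ln_series'\<close>.\<close>

definition ln1p_taylor :: "nat \<Rightarrow> real list" where
  "ln1p_taylor N = map (\<lambda>n. - ((-1) ^ n) / real n) [0..<N]"

lemma ln1p_taylor_error:
  fixes u d :: real
  assumes ud: "\<bar>u\<bar> \<le> d" and d1: "d < 1" and N: "0 < N"
  shows "\<bar>ln (1 + u) - plist_eval (ln1p_taylor N) u\<bar> \<le> d ^ N / (real N * (1 - d))"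
proof -
  define a where "a n = - ((-u) ^ n) / real n" for n
  have taylor: "plist_eval (ln1p_taylor N) u = (\<Sum>n<N. a n)"
    unfolding ln1p_taylor_def plist_eval_sum a_def
    by (simp add: power_mult_distrib[symmetric] field_simps)
  have d0: "0 \<le> d" using ud by linarith
  have "a sums ln (1 + u)"
    unfolding a_def using ln_series'[of u] ud d1 by simp
  then have tail: "(\<lambda>n. a (n + N)) sums (ln (1 + u) - (\<Sum>n<N. a n))"
    by (rule sums_split_initial_segment)
  have geo: "(\<lambda>n. d ^ N / real N * d ^ n) sums (d ^ N / real N * (1 / (1 - d)))"
    by (intro sums_mult geometric_sums) (use d0 d1 in auto)
  have "norm (a (n + N)) \<le> d ^ N / real N * d ^ n" for n
  proof -
    have "norm (a (n + N)) = \<bar>u\<bar> ^ (n + N) / real (n + N)"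
      by (simp add: a_def power_abs)
    also have "\<dots> \<le> d ^ (n + N) / real (n + N)"
      by (intro divide_right_mono power_mono ud) auto
    also have "\<dots> \<le> d ^ (n + N) / real N"
      using N d0 by (intro divide_left_mono) auto
    finally show ?thesis by (simp add: power_add mult_ac)
  qed
  then have "norm (\<Sum>n. a (n + N)) \<le> (\<Sum>n. d ^ N / real N * d ^ n)"
    using geo by (intro norm_suminf_le) (auto simp: sums_iff)
  then have "norm (ln (1 + u) - (\<Sum>n<N. a n)) \<le> d ^ N / real N * (1 / (1 - d))"
    using tail geo by (simp add: sums_iff)
  then show ?thesis by (simp add: taylor field_simps)
qed

lemma ln_quadratic_series_bounds:
  fixes x :: real
  assumes x: "1 \<le> x"
  defines "y \<equiv> (x - 1) / (x + 1)"
  shows "(\<Sum>n<K. 2 * y ^ (2*n+1) / real (2*n+1)) \<le> ln x"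
    and "ln x \<le> (\<Sum>n<K. 2 * y ^ (2*n+1) / real (2*n+1)) + 2 * y ^ (2*K+1) / (real (2*K+1) * (1 - y\<^sup>2))"
proof -
  define a where "a n = 2 * y ^ (2*n+1) / real (2*n+1)" for n
  have s: "a sums ln x" unfolding a_def y_def using x by (intro ln_series_quadratic) auto
  have y0: "0 \<le> y" and y1: "y < 1" unfolding y_def using x by auto
  have a0: "0 \<le> a n" for n unfolding a_def using y0 by auto
  show "(\<Sum>n<K. 2 * y ^ (2*n+1) / real (2*n+1)) \<le> ln x"
    using sum_le_suminf[OF sums_summable[OF s], of "{..<K}"] a0 s unfolding a_def by (auto simp: sums_iff)
  have tail: "(\<lambda>n. a (n + K)) sums (ln x - (\<Sum>n<K. a n))"
    by (rule sums_split_initial_segment[OF s])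
  have "y\<^sup>2 < 1" using y0 y1 by (simp add: abs_square_less_1)
  then have geo: "(\<lambda>n. 2 * y ^ (2*K+1) / real (2*K+1) * (y\<^sup>2) ^ n)
      sums (2 * y ^ (2*K+1) / real (2*K+1) * (1 / (1 - y\<^sup>2)))"
    by (intro sums_mult geometric_sums) (use y0 in auto)
  have "a (n + K) \<le> 2 * y ^ (2*K+1) / real (2*K+1) * (y\<^sup>2) ^ n" for n
  proof -
    have "a (n + K) = 2 * (y ^ (2*K+1) * (y\<^sup>2) ^ n) / real (2*(n+K)+1)"
      unfolding a_def by (simp add: power_add power_mult[symmetric] algebra_simps)
    also have "\<dots> \<le> 2 * (y ^ (2*K+1) * (y\<^sup>2) ^ n) / real (2*K+1)"
      using y0 by (intro divide_left_mono) auto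
    finally show ?thesis by simp
  qed
  from sums_le[OF this tail geo]
  show "ln x \<le> (\<Sum>n<K. 2 * y ^ (2*n+1) / real (2*n+1)) + 2 * y ^ (2*K+1) / (real (2*K+1) * (1 - y\<^sup>2))"
    unfolding a_def by (simp add: field_simps)
qed

lemma ln_2_bounds:
  "51145234580810622639/73786976294838206464 \<le> ln (2::real)"
  "ln (2::real) \<le> 818323753292969962227/1180591620717411303424"
  using ln_quadratic_series_bounds[of 2 20] by (simp_all add: lessThan_nat_numeral power_divide)

lemma ln_3_bounds:
  "162126557802343517109/147573952589676412928 \<le> ln (3::real)"
  "ln (3::real) \<le> 648506231209374068437/590295810358705651712"
  using ln_quadratic_series_bounds[of 3 34] by (simp_all add: lessThan_nat_numeral power_divide)

lemma ln_2_3_ratio: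
  "ln ((2::real) ^ a * 3 ^ b / (2 ^ a' * 3 ^ b')) = (real a - real a') * ln 2 + (real b - real b') * ln 3"
  by (simp add: ln_div ln_mult ln_realpow algebra_simps)

section \<open>Polynomial approximation of \<open>g\<^sup>5 ln g\<close>\<close>

definition psi :: "real \<Rightarrow> real" where
  "psi g = g ^ 5 * ln g"

text \<open>With \<open>g = m + h\<close> and \<open>ln g = ln c + ln (1 + u)\<close>, \<open>u = (m - c)/c + h/c\<close>, these are the
  polynomials in \<open>h\<close> whose nonnegativity for \<open>\<bar>h\<bar> \<le> r\<close> gives \<open>p g - eps \<le> psi g\<close> and
  \<open>psi g \<le> p g + eps\<close>, given \<open>L\<close> bounding \<open>ln c\<close> and \<open>T\<close> bounding the Taylor error of \<open>ln (1 + u)\<close>.\<close>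

definition psi_lower_cert :: "real list \<Rightarrow> real \<Rightarrow> real \<Rightarrow> real \<Rightarrow> real \<Rightarrow> nat \<Rightarrow> real \<Rightarrow> real list" where
  "psi_lower_cert p m c L T N eps =
     plist_add (plist_add (plist_mult (plist_pow [m, 1] 5) (plist_add [L - T] (plist_comp (ln1p_taylor N) [(m - c)/c, 1/c])))
       (map uminus (plist_comp p [m, 1]))) [eps]"

definition psi_upper_cert :: "real list \<Rightarrow> real \<Rightarrow> real \<Rightarrow> real \<Rightarrow> real \<Rightarrow> nat \<Rightarrow> real \<Rightarrow> real list" where
  "psi_upper_cert p m c L T N eps =
     plist_add (plist_add (map uminus (plist_mult (plist_pow [m, 1] 5) (plist_add [L + T] (plist_comp (ln1p_taylor N) [(m - c)/c, 1/c]))))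
       (plist_comp p [m, 1])) [eps]"

lemma psi_approx_on_interval:
  fixes lo hi c Llo Lhi T d eps g :: real
  assumes lo: "0 < lo" and c: "0 < c" and L: "Llo \<le> ln c" "ln c \<le> Lhi" and N: "0 < N"
    and dlo: "\<bar>lo/c - 1\<bar> \<le> d" and dhi: "\<bar>hi/c - 1\<bar> \<le> d" and d1: "d < 1"
    and T: "d ^ N / (real N * (1 - d)) \<le> T"
    and cert_lo: "0 \<le> plist_lower_bound (psi_lower_cert p ((lo + hi)/2) c Llo T N eps) ((hi - lo)/2)"
    and cert_hi: "0 \<le> plist_lower_bound (psi_upper_cert p ((lo + hi)/2) c Lhi T N eps) ((hi - lo)/2)"
    and g: "g \<in> {lo..hi}"
  shows "\<bar>psi g - plist_eval p g\<bar> \<le> eps"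
proof -
  define m where "m = (lo + hi)/2"
  define h where "h = g - m"
  define u where "u = g/c - 1"
  have g0: "0 < g" using g lo by auto
  have hr: "\<bar>h\<bar> \<le> (hi - lo)/2" using g unfolding h_def m_def by (auto simp: abs_if field_simps)
  have "lo/c - 1 \<le> u" "u \<le> hi/c - 1" using g c by (auto simp: u_def divide_right_mono)
  then have "\<bar>u\<bar> \<le> d" using dlo dhi by linarith
  then have taylor: "\<bar>ln (1 + u) - plist_eval (ln1p_taylor N) u\<bar> \<le> T"
    using ln1p_taylor_error[OF _ d1 N] T by fastforce
  have ln_g: "ln g = ln c + ln (1 + u)" using c g0 by (simp add: u_def ln_div)
  have u: "(m - c)/c + h/c = u" and g_eq: "m + h = g" using c by (simp_all add: u_def h_def field_simps)
  have "0 \<le> plist_eval (psi_lower_cert p m c Llo T N eps) h"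
    using cert_lo plist_lower_bound_le[OF hr] unfolding m_def by (rule order_trans)
  then have lower: "plist_eval p g - eps \<le> g^5 * (Llo - T + plist_eval (ln1p_taylor N) u)"
    by (simp add: psi_lower_cert_def u g_eq del: plist_pow_numeral)
  have "0 \<le> plist_eval (psi_upper_cert p m c Lhi T N eps) h"
    using cert_hi plist_lower_bound_le[OF hr] unfolding m_def by (rule order_trans)
  then have upper: "g^5 * (Lhi + T + plist_eval (ln1p_taylor N) u) \<le> plist_eval p g + eps"
    by (simp add: psi_upper_cert_def u g_eq del: plist_pow_numeral)
  have "g^5 * (Llo - T + plist_eval (ln1p_taylor N) u) \<le> psi g"
       "psi g \<le> g^5 * (Lhi + T + plist_eval (ln1p_taylor N) u)"
    unfolding psi_def using taylor L ln_g g0 by (intro mult_left_mono; simp)+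
  with lower upper show ?thesis by linarith
qed

lemma psi_bounds_le_one:
  assumes "0 < g" "g \<le> 1"
  shows "- (g ^ 4) \<le> psi g" "psi g \<le> 0"
proof -
  have "ln (1/g) \<le> 1/g - 1" using assms by (intro ln_le_minus_one) auto
  then have "g ^ 5 * (- ln g) \<le> g ^ 5 * (1/g)"
    using assms by (intro mult_left_mono) (auto simp: ln_div)
  then show "- (g ^ 4) \<le> psi g"
    using assms by (simp add: psi_def eval_nat_numeral field_simps)
  show "psi g \<le> 0"
    using assms by (simp add: psi_def mult_nonneg_nonpos)
qed

lemma psi_approx_near_zero:
  fixes a eps g :: real
  assumes a: "a \<le> 1" and g: "0 < g" "g \<le> a"
    and cert_lo: "0 \<le> plist_lower_bound
      (plist_add (map uminus (plist_add (plist_pow [a/2, 1] 4) (plist_comp p [a/2, 1]))) [eps]) (a/2)"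
    and cert_hi: "0 \<le> plist_lower_bound (plist_add (plist_comp p [a/2, 1]) [eps]) (a/2)"
  shows "\<bar>psi g - plist_eval p g\<bar> \<le> eps"
proof -
  define h where "h = g - a/2"
  have hr: "\<bar>h\<bar> \<le> a/2" using g by (auto simp: h_def abs_if)
  have g_eq: "a/2 + h = g" by (simp add: h_def)
  have "0 \<le> eps - g ^ 4 - plist_eval p g"
    using order_trans[OF cert_lo plist_lower_bound_le[OF hr]] by (simp add: g_eq del: plist_pow_numeral)
  moreover have "0 \<le> plist_eval p g + eps"
    using order_trans[OF cert_hi plist_lower_bound_le[OF hr]] by (simp add: g_eq)
  moreover have "- (g ^ 4) \<le> psi g" "psi g \<le> 0"
    using psi_bounds_le_one g a by auto
  ultimately show ?thesis by linarith
qed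

text \<open>A polynomial fit of \<open>psi\<close> found numerically; only the certified bound \<open>psi_poly_error\<close> matters.\<close>

definition psi_poly :: "real list" where
  "psi_poly = [-941809215/1099511627776, 1131476113/34359738368, -4242477323678901943/18446744073709551616,
    13240411860900716713/18446744073709551616, -7175019889702452811/4611686018427387904,
    6241138875785297571/9223372036854775808, 1885206173034719587/4611686018427387904,
    -508374654551833447/9223372036854775808, 122100381200423909/18446744073709551616,
    -10904568860358903/18446744073709551616, 164769455217063/4611686018427387904,
    -5960651752633/4611686018427387904, 388158011449/18446744073709551616]"

lemmas psi_cert_simps = psi_lower_cert_def psi_upper_cert_def ln1p_taylor_def psi_poly_def
  plist_lower_bound_def upt_conv_Cons power_divide

lemma psi_poly_error_piece1: "g \<in> {1/8..9/16} \<Longrightarrow> \<bar>psi g - plist_eval psi_poly g\<bar> \<le> 1/400"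
  using ln_2_bounds ln_3_bounds ln_2_3_ratio[of 0 1 3 0]
  by (intro psi_approx_on_interval[where lo = "1/8" and hi = "9/16" and c = "3/8"
        and Llo = "-1157958797460161749809/1180591620717411303424" and Lhi = "-578979398730080874899/590295810358705651712"
        and N = 10 and d = "2/3" and T = "6141979472715689553/1180591620717411303424"])
     (simp_all add: psi_cert_simps)

lemma psi_poly_error_piece2: "g \<in> {9/16..91/64} \<Longrightarrow> \<bar>psi g - plist_eval psi_poly g\<bar> \<le> 1/400"
  by (intro psi_approx_on_interval[where lo = "9/16" and hi = "91/64" and c = "1"
        and Llo = "0" and Lhi = "0"
        and N = 10 and d = "7/16" and T = "53920975839309187/1180591620717411303424"])
     (simp_all add: psi_cert_simps)

lemma psi_poly_error_piece3: "g \<in> {91/64..43/16} \<Longrightarrow> \<bar>psi g - plist_eval psi_poly g\<bar> \<le> 1/400"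
  using ln_2_bounds
  by (intro psi_approx_on_interval[where lo = "91/64" and hi = "43/16" and c = "2"
        and Llo = "51145234580810622639/73786976294838206464" and Lhi = "818323753292969962227/1180591620717411303424"
        and N = 10 and d = "11/32" and T = "4144359762044675/1180591620717411303424"])
     (simp_all add: psi_cert_simps)

lemma psi_poly_error_piece4: "g \<in> {43/16..281/64} \<Longrightarrow> \<bar>psi g - plist_eval psi_poly g\<bar> \<le> 1/400"
  using ln_2_bounds ln_3_bounds ln_2_3_ratio[of 5 0 0 2]
  by (intro psi_approx_on_interval[where lo = "43/16" and hi = "281/64" and c = "32/9"
        and Llo = "374398460406838384343/295147905179352825856" and Lhi = "1497593841627353537391/1180591620717411303424"
        and N = 10 and d = "125/512" and T = "117505775422859/1180591620717411303424"])
     (simp_all add: psi_cert_simps)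

lemma psi_poly_error_piece5: "g \<in> {281/64..203/32} \<Longrightarrow> \<bar>psi g - plist_eval psi_poly g\<bar> \<le> 1/400"
  using ln_2_bounds ln_3_bounds ln_2_3_ratio[of 4 0 0 1]
  by (intro psi_approx_on_interval[where lo = "281/64" and hi = "203/32" and c = "16/3"
        and Llo = "988141275376565856011/590295810358705651712" and Lhi = "494070637688282928009/295147905179352825856"
        and N = 10 and d = "97/512" and T = "135568665083/18446744073709551616"])
     (simp_all add: psi_cert_simps)

lemma psi_poly_error_piece6: "g \<in> {203/32..515/64} \<Longrightarrow> \<bar>psi g - plist_eval psi_poly g\<bar> \<le> 1/400"
  using ln_2_bounds ln_3_bounds ln_2_3_ratio[of 0 3 2 0]
  by (intro psi_approx_on_interval[where lo = "203/32" and hi = "515/64" and c = "27/4"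
        and Llo = "1127194940335152243081/590295810358705651712" and Lhi = "1127194940335152243087/590295810358705651712"
        and N = 10 and d = "83/432" and T = "626010314989/73786976294838206464"])
     (simp_all add: psi_cert_simps)

lemma psi_poly_error_piece7: "g \<in> {515/64..9} \<Longrightarrow> \<bar>psi g - plist_eval psi_poly g\<bar> \<le> 1/400"
  using ln_2_bounds ln_3_bounds ln_2_3_ratio[of 0 2 0 0]
  by (intro psi_approx_on_interval[where lo = "515/64" and hi = "9" and c = "9"
        and Llo = "162126557802343517109/73786976294838206464" and Lhi = "648506231209374068437/295147905179352825856"
        and N = 10 and d = "61/576" and T = "5857718205/295147905179352825856"])
     (simp_all add: psi_cert_simps)

lemma psi_poly_error_near_zero: "0 < g \<Longrightarrow> g \<le> 1/8 \<Longrightarrow> \<bar>psi g - plist_eval psi_poly g\<bar> \<le> 1/400"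
  by (rule psi_approx_near_zero[where a = "1/8"]) (simp_all add: psi_poly_def plist_lower_bound_def)

lemma psi_poly_error:
  assumes "0 < g" "g \<le> 9"
  shows "\<bar>psi g - plist_eval psi_poly g\<bar> \<le> 1/400"
proof -
  consider "g \<le> 1/8" | "g \<in> {1/8..9/16}" | "g \<in> {9/16..91/64}" | "g \<in> {91/64..43/16}"
    | "g \<in> {43/16..281/64}" | "g \<in> {281/64..203/32}" | "g \<in> {203/32..515/64}" | "g \<in> {515/64..9}"
    using assms by fastforce
  then show ?thesis
    using assms psi_poly_error_near_zero psi_poly_error_piece1 psi_poly_error_piece2
      psi_poly_error_piece3 psi_poly_error_piece4 psi_poly_error_piece5 psi_poly_error_piece6
      psi_poly_error_piece7
    by cases blast+
qed

section \<open>Integrals of powers of \<open>\<bar>P(e\<^sup>2\<^sup>\<pi>\<^sup>i\<^sup>x)\<bar>\<^sup>2\<close>\<close>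

lemma has_integral_cos_2pi_int:
  fixes k :: int
  shows "((\<lambda>x. cos (2*pi*k*x)) has_integral (if k = 0 then 1/2 else 0)) {0..1/2::real}"
proof (cases "k = 0")
  case False
  have "((\<lambda>x. sin (2*pi*k*x) / (2*pi*k)) has_vector_derivative cos (2*pi*k*x)) (at x within {0..1/2})" for x
    using False by (auto intro!: derivative_eq_intros simp: has_real_derivative_iff_has_vector_derivative[symmetric])
  then have "((\<lambda>x. cos (2*pi*k*x)) has_integral sin (2*pi*k*(1/2)) / (2*pi*k) - sin (2*pi*k*0) / (2*pi*k)) {0..1/2::real}"
    by (intro fundamental_theorem_of_calculus) auto
  moreover have "sin (2*pi*k*(1/2)) = 0"
    using sin_npi_int[of k] by (simp add: mult.commute)
  ultimately show ?thesis using False by simp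
qed (use has_integral_const_real[of "1::real" 0 "1/2"] in simp)

lemma cmod_trig_poly_squared:
  fixes q :: "real list"
  shows "(cmod (plist_eval (map of_real q) (cis (2*pi*x))))\<^sup>2
     = (\<Sum>i<length q. \<Sum>j<length q. q!i * q!j * cos (2*pi*(int i - int j)*x))"
proof -
  define w where "w = plist_eval (map of_real q) (cis (2*pi*x))"
  have w: "w = (\<Sum>i<length q. of_real (q!i) * cis (2*pi*i*x))"
    unfolding w_def plist_eval_sum by (simp add: Complex.DeMoivre mult_ac)
  have "(cmod w)\<^sup>2 = (\<Sum>i<length q. q!i * cos (2*pi*i*x))\<^sup>2 + (\<Sum>i<length q. q!i * sin (2*pi*i*x))\<^sup>2"
    by (simp add: cmod_power2 w)
  also have "\<dots> = (\<Sum>i<length q. \<Sum>j<length q. q!i * q!j *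
      (cos (2*pi*i*x) * cos (2*pi*j*x) + sin (2*pi*i*x) * sin (2*pi*j*x)))"
    by (simp add: power2_eq_square sum_product sum.distrib[symmetric] algebra_simps)
  also have "\<dots> = (\<Sum>i<length q. \<Sum>j<length q. q!i * q!j * cos (2*pi*(int i - int j)*x))"
    by (intro sum.cong refl) (simp add: cos_diff[symmetric] algebra_simps)
  finally show ?thesis unfolding w_def .
qed

lemma has_integral_cmod_trig_poly_squared:
  fixes q :: "real list"
  shows "((\<lambda>x. (cmod (plist_eval (map of_real q) (cis (2*pi*x))))\<^sup>2) has_integral
     (\<Sum>i<length q. (q!i)\<^sup>2) / 2) {0..1/2}"
proof -
  have "((\<lambda>x. \<Sum>i<length q. \<Sum>j<length q. q!i * q!j * cos (2*pi*(int i - int j)*x)) has_integral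
     (\<Sum>i<length q. \<Sum>j<length q. q!i * q!j * (if int i - int j = 0 then 1/2 else 0))) {0..1/2}"
    by (intro has_integral_sum has_integral_mult_right has_integral_cos_2pi_int finite_lessThan)
  also have "(\<Sum>i<length q. \<Sum>j<length q. q!i * q!j * (if int i - int j = 0 then 1/2 else 0))
      = (\<Sum>i<length q. \<Sum>j<length q. if j = i then q!i * q!j / 2 else 0)"
    by (intro sum.cong refl) auto
  also have "\<dots> = (\<Sum>i<length q. (q!i)\<^sup>2) / 2"
    by (simp add: power2_eq_square sum_divide_distrib)
  finally show ?thesis by (simp only: cmod_trig_poly_squared)
qed

definition sum_sq :: "int list \<Rightarrow> int" where
  "sum_sq p = sum_list (map (\<lambda>a. a\<^sup>2) p)"

lemma has_integral_cmod_trig_poly_squared_pow: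
  fixes p :: "int list"
  shows "((\<lambda>x. ((cmod (plist_eval (map of_int p) (cis (2*pi*x))))\<^sup>2) ^ k) has_integral
     sum_sq (plist_pow p k) / 2) {0..1/2}"
proof -
  define q where "q = map real_of_int (plist_pow p k)"
  have "map of_real q = (map of_int (plist_pow p k) :: complex list)"
    by (simp add: q_def)
  then have "((cmod (plist_eval (map of_int p) (cis (2*pi*x))))\<^sup>2) ^ k
      = (cmod (plist_eval (map of_real q) (cis (2*pi*x))))\<^sup>2" for x
    by (simp add: map_of_int_plist_pow norm_power power_mult[symmetric] mult.commute)
  moreover have "(\<Sum>i<length q. (q!i)\<^sup>2) = sum_sq (plist_pow p k)"
    unfolding sum_sq_def q_def by (simp add: sum_list_sum_nth atLeast0LessThan)
  ultimately show ?thesis using has_integral_cmod_trig_poly_squared[of q] by simp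
qed

definition poly_moment :: "real list \<Rightarrow> int list \<Rightarrow> real" where
  "poly_moment p P = (\<Sum>k<length p. p ! k * sum_sq (plist_pow P k) / 2)"

lemma has_integral_plist_eval_cmod_trig_poly_squared:
  "((\<lambda>x. plist_eval p ((cmod (plist_eval (map of_int P) (cis (2*pi*x))))\<^sup>2)) has_integral poly_moment p P) {0..1/2}"
  unfolding plist_eval_sum[of p] poly_moment_def times_divide_eq_right[symmetric]
  by (intro has_integral_sum has_integral_mult_right has_integral_cmod_trig_poly_squared_pow finite_lessThan)

lemma trinomial_nonzero_on_circle:
  fixes z s :: complex
  assumes z: "cmod z = 1" and s: "s = 1 \<or> s = -1"
  shows "1 + z + s * z ^ 7 \<noteq> 0"
proof
  assume eq: "1 + z + s * z ^ 7 = 0"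
  then have "cmod (1 + z) = cmod (s * z ^ 7)" by (simp add: eq_neg_iff_add_eq_0[symmetric])
  then have "cmod (1 + z) = 1" using s z by (auto simp: norm_mult norm_power)
  \<comment> \<open>so \<open>z\<close> is a primitive cube root of unity, whence \<open>z ^ 7 = z\<close>\<close>
  then have "(1 + Re z)\<^sup>2 + (Im z)\<^sup>2 = 1" and circle: "(Re z)\<^sup>2 + (Im z)\<^sup>2 = 1"
    using cmod_power2[of "1 + z"] cmod_power2[of z] z by simp_all
  then have re: "Re z = -1/2" by (simp add: power2_eq_square algebra_simps)
  with circle have "(Im z)\<^sup>2 = 3/4" by (simp add: power2_eq_square)
  with re have "z\<^sup>2 + z + 1 = 0" by (simp add: complex_eq_iff power2_eq_square algebra_simps)
  moreover have "z ^ 3 - 1 = (z - 1) * (z\<^sup>2 + z + 1)"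
    by (simp add: algebra_simps power2_eq_square power3_eq_cube)
  ultimately have "z ^ 3 = 1" by simp
  then have "z ^ 7 = z"
    using power_mult[of z 3 2] power_add[of z 6 1] by simp
  with eq have "1 + (1 + s) * z = 0" by (simp add: algebra_simps)
  with s have "1 + 2 * z = 0" by auto
  then have "cmod (2 * z) = 1" by (simp add: add_eq_0_iff)
  with z show False by (simp add: norm_mult)
qed

lemma cmod_trinomial_le:
  fixes z s :: complex
  assumes "cmod z = 1" "cmod s = 1"
  shows "cmod (1 + z + s * z ^ 7) \<le> 3"
  using norm_triangle_ineq[of "1 + z" "s * z ^ 7"] norm_triangle_ineq[of 1 z] assms
  by (simp add: norm_mult norm_power)

definition P_minus :: "int list" where
  "P_minus = [1, 1, 0, 0, 0, 0, 0, -1]"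

definition P_plus :: "int list" where
  "P_plus = [1, 1, 0, 0, 0, 0, 0, 1]"

lemma exp_2pi_i_eq_cis: "exp (of_nat n * 2 * pi * \<i> * complex_of_real x) = cis (2*pi*x) ^ n"
  by (simp add: cis_conv_exp exp_of_nat_mult[symmetric] mult_ac)

lemma G_minus_eq: "G_minus x = (cmod (1 + cis (2*pi*x) - cis (2*pi*x) ^ 7))\<^sup>2"
  using exp_2pi_i_eq_cis[of 1 x] exp_2pi_i_eq_cis[of 7 x] by (simp add: G_minus_def)

lemma G_plus_eq: "G_plus x = (cmod (1 + cis (2*pi*x) + cis (2*pi*x) ^ 7))\<^sup>2"
  using exp_2pi_i_eq_cis[of 1 x] exp_2pi_i_eq_cis[of 7 x] by (simp add: G_plus_def)

lemma G_minus_trig_poly: "G_minus x = (cmod (plist_eval (map of_int P_minus) (cis (2*pi*x))))\<^sup>2"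
  by (simp add: G_minus_eq P_minus_def eval_nat_numeral algebra_simps)

lemma G_plus_trig_poly: "G_plus x = (cmod (plist_eval (map of_int P_plus) (cis (2*pi*x))))\<^sup>2"
  by (simp add: G_plus_eq P_plus_def eval_nat_numeral algebra_simps)

lemma G_minus_pos: "0 < G_minus x"
  using trinomial_nonzero_on_circle[of "cis (2*pi*x)" "-1"] by (simp add: G_minus_eq)

lemma G_plus_pos: "0 < G_plus x"
  using trinomial_nonzero_on_circle[of "cis (2*pi*x)" 1] by (simp add: G_plus_eq)

lemma G_minus_le_9: "G_minus x \<le> 9"
proof -
  have "cmod (1 + cis (2*pi*x) - cis (2*pi*x) ^ 7) \<le> 3"
    using cmod_trinomial_le[of "cis (2*pi*x)" "-1"] by simp
  from power_mono[OF this norm_ge_zero, of 2] show ?thesis by (simp add: G_minus_eq)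
qed

lemma G_plus_le_9: "G_plus x \<le> 9"
proof -
  have "cmod (1 + cis (2*pi*x) + cis (2*pi*x) ^ 7) \<le> 3"
    using cmod_trinomial_le[of "cis (2*pi*x)" 1] by simp
  from power_mono[OF this norm_ge_zero, of 2] show ?thesis by (simp add: G_plus_eq)
qed

lemma continuous_on_G_minus: "continuous_on A G_minus"
  unfolding G_minus_def by (intro continuous_intros)

lemma continuous_on_G_plus: "continuous_on A G_plus"
  unfolding G_plus_def by (intro continuous_intros)

section \<open>The derivative of \<open>d\<close> at 5\<close>

lemma has_real_derivative_integral_powr:
  fixes F :: "real \<Rightarrow> real"
  assumes F: "continuous_on {a..b} F" and pos: "\<And>x. x \<in> {a..b} \<Longrightarrow> 0 < F x"
  shows "((\<lambda>t. integral {a..b} (\<lambda>x. F x powr t)) has_real_derivative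
    integral {a..b} (\<lambda>x. F x powr t * ln (F x))) (at t)"
proof -
  have "((\<lambda>t. integral (cbox a b) (\<lambda>x. F x powr t)) has_field_derivative
      integral (cbox a b) (\<lambda>x. F x powr t * ln (F x))) (at t within UNIV)"
  proof (rule leibniz_rule_field_derivative)
    fix s x :: real
    have "((\<lambda>s. F x powr s) has_real_derivative 1 * ln (F x) * F x powr s) (at s)"
      by (intro has_real_derivative_const_powr DERIV_ident)
    then show "((\<lambda>s. F x powr s) has_field_derivative F x powr s * ln (F x)) (at s within UNIV)"
      by (simp add: mult.commute)
  next
    fix s :: real
    show "(\<lambda>x. F x powr s) integrable_on cbox a b"
      using F pos by (intro integrable_continuous continuous_intros) (auto simp: less_imp_neq[symmetric])
  next
    have "continuous_on (UNIV \<times> cbox a b) (\<lambda>p. F (snd p))"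
      by (rule continuous_on_compose2[OF F continuous_on_snd]) auto
    then show "continuous_on (UNIV \<times> cbox a b) (\<lambda>(s, x). F x powr s * ln (F x))"
      using pos unfolding split_beta
      by (intro continuous_intros continuous_on_fst) (auto simp: less_imp_neq[symmetric])
  qed auto
  then show ?thesis by simp
qed

lemma d_fun_eq:
  "d_fun = (\<lambda>t. integral {0..1/2} (\<lambda>x. G_minus x powr t) - integral {0..1/2} (\<lambda>x. G_plus x powr t))"
  unfolding d_fun_def
  by (intro ext integral_diff integrable_continuous_interval continuous_intros
      continuous_on_G_minus continuous_on_G_plus) (auto simp: less_imp_neq[symmetric] G_minus_pos G_plus_pos)

lemma integral_approx_error:
  fixes f g :: "real \<Rightarrow> real"
  assumes g: "(g has_integral I) {a..b}" and f: "f integrable_on {a..b}" and "a \<le> b"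
    and err: "\<And>x. x \<in> {a..b} \<Longrightarrow> \<bar>f x - g x\<bar> \<le> eps"
  shows "\<bar>integral {a..b} f - I\<bar> \<le> eps * (b - a)"
proof -
  have int: "((\<lambda>x. f x - g x) has_integral integral {a..b} f - I) {a..b}"
    using f g by (intro has_integral_diff integrable_integral)
  have "0 \<le> eps" using err[of a] \<open>a \<le> b\<close> by force
  moreover have "\<And>x. x \<in> {a..b} - {} \<Longrightarrow> norm (f x - g x) \<le> eps" using err by simp
  ultimately show ?thesis
    using has_integral_bound_real[OF _ finite.emptyI int] \<open>a \<le> b\<close> by simp
qed

lemma integral_psi_G_approx:
  fixes G :: "real \<Rightarrow> real"
  assumes G: "continuous_on {0..1/2} G" "\<And>x. 0 < G x" "\<And>x. G x \<le> 9"
    and moment: "((\<lambda>x. plist_eval psi_poly (G x)) has_integral M) {0..1/2}"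
  shows "\<bar>integral {0..1/2} (\<lambda>x. psi (G x)) - M\<bar> \<le> 1/800"
proof -
  have "(\<lambda>x. psi (G x)) integrable_on {0..1/2}"
    unfolding psi_def using G by (intro integrable_continuous_interval continuous_intros) (auto simp: less_imp_neq[symmetric])
  moreover have "\<bar>psi (G x) - plist_eval psi_poly (G x)\<bar> \<le> 1/400" for x
    using G by (intro psi_poly_error)
  ultimately have "\<bar>integral {0..1/2} (\<lambda>x. psi (G x)) - M\<bar> \<le> 1/400 * (1/2 - 0)"
    by (intro integral_approx_error[OF moment]) auto
  then show ?thesis by simp
qed

lemma psi_poly_moment_gap: "1/400 < poly_moment psi_poly P_minus - poly_moment psi_poly P_plus"
  by (simp add: poly_moment_def psi_poly_def P_minus_def P_plus_def sum_sq_def lessThan_nat_numeral)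

theorem lemma4:
  shows "\<exists>D. (d_fun has_real_derivative D) (at 5) \<and> D > 0"
proof -
  define D where "D = integral {0..1/2} (\<lambda>x. psi (G_minus x)) - integral {0..1/2} (\<lambda>x. psi (G_plus x))"
  have "(d_fun has_real_derivative integral {0..1/2} (\<lambda>x. G_minus x powr 5 * ln (G_minus x))
      - integral {0..1/2} (\<lambda>x. G_plus x powr 5 * ln (G_plus x))) (at 5)"
    unfolding d_fun_eq
    by (intro DERIV_diff has_real_derivative_integral_powr continuous_on_G_minus continuous_on_G_plus
        G_minus_pos G_plus_pos)
  then have "(d_fun has_real_derivative D) (at 5)"
    by (simp add: D_def psi_def less_imp_le[OF G_minus_pos] less_imp_le[OF G_plus_pos])
  moreover have "\<bar>integral {0..1/2} (\<lambda>x. psi (G_minus x)) - poly_moment psi_poly P_minus\<bar> \<le> 1/800"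
    using has_integral_plist_eval_cmod_trig_poly_squared[of psi_poly P_minus]
    by (intro integral_psi_G_approx continuous_on_G_minus G_minus_pos G_minus_le_9) (simp add: G_minus_trig_poly)
  moreover have "\<bar>integral {0..1/2} (\<lambda>x. psi (G_plus x)) - poly_moment psi_poly P_plus\<bar> \<le> 1/800"
    using has_integral_plist_eval_cmod_trig_poly_squared[of psi_poly P_plus]
    by (intro integral_psi_G_approx continuous_on_G_plus G_plus_pos G_plus_le_9) (simp add: G_plus_trig_poly)
  then have "0 < D"
    using calculation psi_poly_moment_gap unfolding D_def abs_le_iff by linarith
  ultimately show ?thesis by blast
qed

end
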